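(* Let $G$ be a compact connected Lie group and, for $p\ge1$, $g\ge0$, $T>0$, let $Z_{p,g,T}$ be the function on $G^p$ $$Z_{p,g,T}(x_1,\ldots,x_p)=\int_{G^{2g+p}}p_T\big(y_1^{-1}x_1y_1\cdots y_p^{-1}x_py_p[a_1,b_1]\cdots[a_g,b_g]\big)\,da_1db_1\cdots da_gdb_g\,dy_1\cdots dy_p,$$ with $[a,b]=aba^{-1}b^{-1}$. Then for all $T,T'>0$, $x_1,\ldots,x_{p-1},x\in G$, $$\big(e^{T\Delta/2}Z_{p,g,T'}(x_1,\ldots,x_{p-1},\cdot)\big)(x)=Z_{p,g,T+T'}(x_1,\ldots,x_{p-1},x).$$
   Context: $G$ has normalized Haar measure, a biinvariant Riemannian metric of volume 1 with Laplacian $\Delta$, and heat kernel $(p_t)_{t>0}$: positive smooth central functions with $(\partial_t-\frac12\Delta)p_t=0$ and $p_t\,dg\to\delta_1$ as $t\to0$. $e^{T\Delta/2}$ is the heat semigroup acting on functions of the last variable. *)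

theory Defs
  imports "HOL-Probability.Probability"
begin

text \<open>Compact connected Lie groups are realised as compact connected subgroups of the unit
group of a finite-dimensional real Banach algebra (e.g. a matrix algebra).\<close>

definition ginv :: "'a::ring_1 \<Rightarrow> 'a" where
  "ginv x = (THE y. x * y = 1 \<and> y * x = 1)"

definition subgroup_of_units :: "'a::ring_1 set \<Rightarrow> bool" where
  "subgroup_of_units G \<longleftrightarrow> 1 \<in> G \<and> (\<forall>x\<in>G. \<forall>y\<in>G. x * y \<in> G)
     \<and> (\<forall>x\<in>G. \<exists>y\<in>G. x * y = 1 \<and> y * x = 1)"

definition compact_connected_lie_group :: "'a::{real_normed_algebra_1,banach} set \<Rightarrow> bool" where
  "compact_connected_lie_group G \<longleftrightarrow> (\<exists>S::'a set. finite S \<and> span S = UNIV)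
     \<and> subgroup_of_units G \<and> compact G \<and> connected G"

definition lie_alg :: "'a::{real_normed_algebra_1,banach} set \<Rightarrow> 'a set" where
  "lie_alg G = {X. \<forall>t::real. exp (t *\<^sub>R X) \<in> G}"

definition haar_prob :: "'a::{real_normed_algebra_1,banach} set \<Rightarrow> 'a measure \<Rightarrow> bool" where
  "haar_prob G \<mu> \<longleftrightarrow> space \<mu> = G \<and> sets \<mu> = sets (restrict_space borel G) \<and> prob_space \<mu>
     \<and> (\<forall>g\<in>G. \<forall>A\<in>sets \<mu>. emeasure \<mu> ((\<lambda>x. g * x) ` A) = emeasure \<mu> A)"

text \<open>Bi-invariant Riemannian metric = Ad-invariant inner product on the Lie algebra.\<close>
definition biinv_metric :: "'a::{real_normed_algebra_1,banach} set \<Rightarrow> ('a \<Rightarrow> 'a \<Rightarrow> real) \<Rightarrow> bool" where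
  "biinv_metric G B \<longleftrightarrow>
     (\<forall>X\<in>lie_alg G. \<forall>Y\<in>lie_alg G. B X Y = B Y X)
   \<and> (\<forall>X\<in>lie_alg G. \<forall>Y\<in>lie_alg G. \<forall>Z\<in>lie_alg G. \<forall>c::real.
        B (X + Y) Z = B X Z + B Y Z \<and> B (c *\<^sub>R X) Z = c * B X Z)
   \<and> (\<forall>X\<in>lie_alg G. X \<noteq> 0 \<longrightarrow> B X X > 0)
   \<and> (\<forall>g\<in>G. \<forall>X\<in>lie_alg G. \<forall>Y\<in>lie_alg G. B (g * X * ginv g) (g * Y * ginv g) = B X Y)"

definition orthonormal_basis :: "'a::{real_normed_algebra_1,banach} set \<Rightarrow> ('a \<Rightarrow> 'a \<Rightarrow> real)
     \<Rightarrow> (nat \<Rightarrow> 'a) \<Rightarrow> nat \<Rightarrow> bool" where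
  "orthonormal_basis G B E n \<longleftrightarrow> (\<forall>i<n. E i \<in> lie_alg G)
     \<and> (\<forall>i<n. \<forall>j<n. B (E i) (E j) = (if i = j then 1 else 0))
     \<and> lie_alg G \<subseteq> span (E ` {..<n})"

text \<open>The Riemannian volume of G equals 1: since the Riemannian volume is a bi-invariant
measure it is vol(G) times the Haar probability; in exponential (orthonormal) coordinates
near the identity it is asymptotic to Lebesgue measure, so vol(G) = 1 iff the ratio below
tends to 1.\<close>
definition volume_one :: "'a::{real_normed_algebra_1,banach} measure \<Rightarrow> (nat \<Rightarrow> 'a) \<Rightarrow> nat \<Rightarrow> bool" where
  "volume_one \<mu> E n \<longleftrightarrow>
     ((\<lambda>r. measure \<mu> ((\<lambda>c. exp (\<Sum>i<n. c i *\<^sub>R E i)) ` {c. (\<Sum>i<n. (c i)\<^sup>2) < r\<^sup>2})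
            / (unit_ball_vol (real n) * r ^ n)) \<longlongrightarrow> 1) (at_right 0)"

definition lie_deriv :: "'a::{real_normed_algebra_1,banach} \<Rightarrow> ('a \<Rightarrow> real) \<Rightarrow> 'a \<Rightarrow> real" where
  "lie_deriv X f x = deriv (\<lambda>s. f (x * exp (s *\<^sub>R X))) 0"

definition laplacian :: "(nat \<Rightarrow> 'a::{real_normed_algebra_1,banach}) \<Rightarrow> nat \<Rightarrow> ('a \<Rightarrow> real) \<Rightarrow> 'a \<Rightarrow> real" where
  "laplacian E n f x = (\<Sum>i<n. lie_deriv (E i) (lie_deriv (E i) f) x)"

text \<open>Iterated partial derivatives of a function of (t,x): None = d/dt, Some X = left-invariant X.\<close>
fun hderiv :: "'a::{real_normed_algebra_1,banach} option list \<Rightarrow> (real \<Rightarrow> 'a \<Rightarrow> real) \<Rightarrow> real \<Rightarrow> 'a \<Rightarrow> real" where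
  "hderiv [] F = F"
| "hderiv (d # ds) F = (\<lambda>t x. case d of
      None \<Rightarrow> deriv (\<lambda>s. hderiv ds F s x) t
    | Some X \<Rightarrow> deriv (\<lambda>s. hderiv ds F t (x * exp (s *\<^sub>R X))) 0)"

definition smooth_on_time_G :: "'a::{real_normed_algebra_1,banach} set \<Rightarrow> (real \<Rightarrow> 'a \<Rightarrow> real) \<Rightarrow> bool" where
  "smooth_on_time_G G F \<longleftrightarrow> (\<forall>ds. set ds \<subseteq> insert None (Some ` lie_alg G) \<longrightarrow>
      continuous_on ({0<..} \<times> G) (\<lambda>(t, x). hderiv ds F t x)
    \<and> (\<forall>t>0. \<forall>x\<in>G. (\<lambda>s. hderiv ds F s x) differentiable (at t)
         \<and> (\<forall>X\<in>lie_alg G. (\<lambda>s. hderiv ds F t (x * exp (s *\<^sub>R X))) differentiable (at 0))))"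

definition heat_kernel :: "'a::{real_normed_algebra_1,banach} set \<Rightarrow> 'a measure \<Rightarrow> (nat \<Rightarrow> 'a) \<Rightarrow> nat
     \<Rightarrow> (real \<Rightarrow> 'a \<Rightarrow> real) \<Rightarrow> bool" where
  "heat_kernel G \<mu> E n p \<longleftrightarrow>
     (\<forall>t>0. \<forall>x\<in>G. p t x > 0)
   \<and> (\<forall>t>0. \<forall>g\<in>G. \<forall>x\<in>G. p t (g * x * ginv g) = p t x)
   \<and> smooth_on_time_G G p
   \<and> (\<forall>t>0. \<forall>x\<in>G. ((\<lambda>s. p s x) has_real_derivative (1/2) * laplacian E n (p t) x) (at t))
   \<and> (\<forall>f. continuous_on G f \<longrightarrow>
        ((\<lambda>t. \<integral>x. p t x * f x \<partial>\<mu>) \<longlongrightarrow> f 1) (at_right 0))"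

text \<open>Heat semigroup e^{T\<Delta>/2} acting by its kernel.\<close>
definition heat_sg :: "'a::{real_normed_algebra_1,banach} measure \<Rightarrow> (real \<Rightarrow> 'a \<Rightarrow> real) \<Rightarrow> real
     \<Rightarrow> ('a \<Rightarrow> real) \<Rightarrow> 'a \<Rightarrow> real" where
  "heat_sg \<mu> p T f x = (\<integral>y. p T (ginv x * y) * f y \<partial>\<mu>)"

definition gcomm :: "'a::ring_1 \<Rightarrow> 'a \<Rightarrow> 'a" where
  "gcomm a b = a * b * ginv a * ginv b"

text \<open>Z_{p,g,T}(x_1..x_p), p = length xs. Integration variables w: a_i = w(2i), b_i = w(2i+1)
for i<g, y_j = w(2g+j) for j<p.\<close>
definition Zfun :: "'a::{real_normed_algebra_1,banach} measure \<Rightarrow> (real \<Rightarrow> 'a \<Rightarrow> real) \<Rightarrow> nat \<Rightarrow> real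
     \<Rightarrow> 'a list \<Rightarrow> real" where
  "Zfun \<mu> p g T xs = (\<integral>w. p T (prod_list
       (map (\<lambda>j. ginv (w (2*g+j)) * xs ! j * w (2*g+j)) [0..<length xs]
        @ map (\<lambda>i. gcomm (w (2*i)) (w (2*i+1))) [0..<g]))
     \<partial>(Pi\<^sub>M {..<2*g + length xs} (\<lambda>_. \<mu>)))"

end

theory Submission
  imports Defs
begin

text \<open>The key fact is the semigroup law \<open>\<integral> p\<^sub>s(v) p\<^sub>R\<^sub>-\<^sub>s(vw) dv = p\<^sub>R(w)\<close>. For fixed \<open>R, w\<close>
  the left side has \<open>s\<close>-derivative \<open>\<onehalf>\<integral> (\<Delta>p\<^sub>s)(v) p\<^sub>R\<^sub>-\<^sub>s(vw) - p\<^sub>s(v) (\<Delta>p\<^sub>R\<^sub>-\<^sub>s)(vw) dv\<close>, which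
  vanishes: the kernels are central, so their left-invariant derivatives are derivatives along
  left translations, and integrating by parts against the left-invariant Haar measure shows that
  \<open>\<Delta>\<close> is symmetric. Letting \<open>s \<rightarrow> 0\<close> the delta property identifies the constant as \<open>p\<^sub>R(w)\<close>.
  In \<open>Z\<close>, centrality moves the conjugate \<open>y\<^sup>-\<^sup>1xy\<close> of the last argument to the front of the
  word, so after Fubini the heat semigroup acting on \<open>Z\<^bsub>T'\<^esub>\<close> becomes a convolution of \<open>p\<^sub>T\<close> with
  \<open>p\<^sub>T\<^sub>'\<close> inside the integral, which is \<open>p\<^sub>T\<^sub>+\<^sub>T\<^sub>'\<close>.\<close>

section \<open>Differentiation under the integral sign\<close>

lemma difference_quotient_bound:
  fixes f f' :: "real \<Rightarrow> real"
  assumes "h \<noteq> 0"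
    and deriv: "\<And>s. s \<in> closed_segment t (t + h) \<Longrightarrow> (f has_real_derivative f' s) (at s)"
    and bound: "\<And>s. s \<in> closed_segment t (t + h) \<Longrightarrow> \<bar>f' s - f' t\<bar> \<le> B"
  shows "\<bar>(f (t + h) - f t) / h - f' t\<bar> \<le> B"
proof -
  have "norm (f (t + h) - f t - (t + h - t) *\<^sub>R f' t) \<le> norm (t + h - t) * B"
    by (rule vector_differentiable_bound_linearization[where S = "closed_segment t (t + h)"])
      (auto simp flip: has_real_derivative_iff_has_vector_derivative
        intro: has_field_derivative_at_within deriv bound)
  then have "\<bar>f (t + h) - f t - h * f' t\<bar> / \<bar>h\<bar> \<le> B"
    using \<open>h \<noteq> 0\<close> by (simp add: divide_le_eq mult.commute)
  moreover have "(f (t + h) - f t) / h - f' t = (f (t + h) - f t - h * f' t) / h"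
    using \<open>h \<noteq> 0\<close> by (simp add: field_simps)
  ultimately show ?thesis by (simp add: abs_divide)
qed

lemma (in finite_measure) integral_difference_quotient_bound:
  assumes "integrable M f" "integrable M g" "integrable M d"
    and bound: "\<And>y. y \<in> space M \<Longrightarrow> \<bar>(f y - g y) / h - d y\<bar> \<le> B"
  shows "\<bar>((\<integral>y. f y \<partial>M) - (\<integral>y. g y \<partial>M)) / h - (\<integral>y. d y \<partial>M)\<bar> \<le> B * measure M (space M)"
proof -
  have "((\<integral>y. f y \<partial>M) - (\<integral>y. g y \<partial>M)) / h - (\<integral>y. d y \<partial>M) = (\<integral>y. (f y - g y) / h - d y \<partial>M)"
    using assms(1-3) by (simp add: diff_divide_distrib)
  moreover have "\<bar>\<integral>y. (f y - g y) / h - d y \<partial>M\<bar> \<le> (\<integral>y. B \<partial>M)"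
    using assms by (intro order_trans[OF integral_abs_bound] integral_mono) auto
  ultimately show ?thesis by (simp add: mult.commute)
qed

lemma uniform_difference_quotient_bound:
  fixes F D :: "real \<Rightarrow> 'b::metric_space \<Rightarrow> real"
  assumes "compact K" and "a < t" "t < b" and "e > 0"
    and deriv: "\<And>s y. s \<in> {a..b} \<Longrightarrow> y \<in> K \<Longrightarrow> ((\<lambda>s. F s y) has_real_derivative D s y) (at s)"
    and cont: "continuous_on ({a..b} \<times> K) (\<lambda>(s, y). D s y)"
  obtains d where "d > 0" and "\<And>h. \<bar>h\<bar> < d \<Longrightarrow> t + h \<in> {a..b}"
    and "\<And>h y. h \<noteq> 0 \<Longrightarrow> \<bar>h\<bar> < d \<Longrightarrow> y \<in> K \<Longrightarrow> \<bar>(F (t + h) y - F t y) / h - D t y\<bar> \<le> e"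
proof -
  have "uniformly_continuous_on ({a..b} \<times> K) (\<lambda>(s, y). D s y)"
    using compact_uniformly_continuous[OF cont compact_Times[OF compact_Icc \<open>compact K\<close>]] .
  then obtain d where "d > 0" and d: "\<And>z z'. z \<in> {a..b} \<times> K \<Longrightarrow> z' \<in> {a..b} \<times> K \<Longrightarrow>
      dist z' z < d \<Longrightarrow> dist ((\<lambda>(s, y). D s y) z') ((\<lambda>(s, y). D s y) z) < e"
    using \<open>e > 0\<close> unfolding uniformly_continuous_on_def by metis
  define d' where "d' = min d (min (t - a) (b - t))"
  show thesis
  proof (rule that[of d'])
    show "d' > 0" using \<open>d > 0\<close> \<open>a < t\<close> \<open>t < b\<close> by (simp add: d'_def)
    show "t + h \<in> {a..b}" if "\<bar>h\<bar> < d'" for h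
      using that by (auto simp: d'_def)
    fix h y assume h: "h \<noteq> 0" "\<bar>h\<bar> < d'" and "y \<in> K"
    have seg: "s \<in> {a..b} \<and> \<bar>s - t\<bar> < d" if "s \<in> closed_segment t (t + h)" for s
      using that h by (auto simp: closed_segment_eq_real_ivl d'_def split: if_splits)
    have "t \<in> {a..b}" using \<open>a < t\<close> \<open>t < b\<close> by simp
    show "\<bar>(F (t + h) y - F t y) / h - D t y\<bar> \<le> e"
    proof (rule difference_quotient_bound)
      show "((\<lambda>s. F s y) has_real_derivative D s y) (at s)" if "s \<in> closed_segment t (t + h)" for s
        using deriv seg[OF that] \<open>y \<in> K\<close> by blast
      show "\<bar>D s y - D t y\<bar> \<le> e" if "s \<in> closed_segment t (t + h)" for s
        using d[of "(t, y)" "(s, y)"] seg[OF that] \<open>t \<in> {a..b}\<close> \<open>y \<in> K\<close>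
        by (simp add: dist_Pair_Pair dist_real_def)
    qed (use h in simp)
  qed
qed

lemma has_real_derivative_integral:
  fixes F D :: "real \<Rightarrow> 'b::metric_space \<Rightarrow> real"
  assumes "finite_measure M" and "compact (space M)" and "a < t" "t < b"
    and deriv: "\<And>s y. s \<in> {a..b} \<Longrightarrow> y \<in> space M \<Longrightarrow> ((\<lambda>s. F s y) has_real_derivative D s y) (at s)"
    and cont: "continuous_on ({a..b} \<times> space M) (\<lambda>(s, y). D s y)"
    and int_F: "\<And>s. s \<in> {a..b} \<Longrightarrow> integrable M (F s)"
    and int_D: "integrable M (D t)"
  shows "((\<lambda>s. \<integral>y. F s y \<partial>M) has_real_derivative (\<integral>y. D t y \<partial>M)) (at t)"
proof -
  interpret finite_measure M by fact
  define m where "m = measure M (space M)"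
  have "m \<ge> 0" by (simp add: m_def)
  have "t \<in> {a..b}" using \<open>a < t\<close> \<open>t < b\<close> by simp
  show ?thesis unfolding DERIV_def
  proof (rule tendstoI)
    fix e :: real assume "e > 0"
    define e' where "e' = e / (m + 1)"
    have "e' > 0" using \<open>e > 0\<close> \<open>m \<ge> 0\<close> by (simp add: e'_def)
    obtain d where "d > 0" and ab: "\<And>h. \<bar>h\<bar> < d \<Longrightarrow> t + h \<in> {a..b}"
      and quot: "\<And>h y. h \<noteq> 0 \<Longrightarrow> \<bar>h\<bar> < d \<Longrightarrow> y \<in> space M
        \<Longrightarrow> \<bar>(F (t + h) y - F t y) / h - D t y\<bar> \<le> e'"
      using uniform_difference_quotient_bound[OF \<open>compact (space M)\<close> \<open>a < t\<close> \<open>t < b\<close> \<open>e' > 0\<close> deriv cont]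
      by blast
    have "\<forall>\<^sub>F h in at 0. h \<noteq> 0 \<and> \<bar>h\<bar> < d"
      using \<open>d > 0\<close> unfolding eventually_at by (auto intro!: exI[of _ d] simp: dist_real_def)
    then show "\<forall>\<^sub>F h in at 0.
        dist (((\<integral>y. F (t + h) y \<partial>M) - (\<integral>y. F t y \<partial>M)) / h) (\<integral>y. D t y \<partial>M) < e"
    proof (rule eventually_mono)
      fix h assume h: "h \<noteq> 0 \<and> \<bar>h\<bar> < d"
      have "\<bar>((\<integral>y. F (t + h) y \<partial>M) - (\<integral>y. F t y \<partial>M)) / h - (\<integral>y. D t y \<partial>M)\<bar> \<le> e' * m"
        unfolding m_def using quot h
        by (intro integral_difference_quotient_bound int_F ab \<open>t \<in> {a..b}\<close> int_D) auto
      moreover have "e' * m < (m + 1) * e'"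
        using \<open>e' > 0\<close> by (simp add: algebra_simps)
      moreover have "(m + 1) * e' = e"
        using \<open>m \<ge> 0\<close> by (simp add: e'_def)
      ultimately show "dist (((\<integral>y. F (t + h) y \<partial>M) - (\<integral>y. F t y \<partial>M)) / h) (\<integral>y. D t y \<partial>M) < e"
        by (simp add: dist_real_def)
    qed
  qed
qed

section \<open>Measurability by rounding to finite nets\<close>

primrec near_index :: "'a::metric_space list \<Rightarrow> real \<Rightarrow> 'a \<Rightarrow> nat" where
  "near_index [] e x = 0"
| "near_index (c # cs) e x = (if dist x c < e then 0 else Suc (near_index cs e x))"

lemma near_index:
  assumes "\<exists>c\<in>set cs. dist x c < e"
  shows "near_index cs e x < length cs" "dist x (cs ! near_index cs e x) < e"
  using assms by (induction cs) auto

lemma measurable_near_index: "near_index cs e \<in> borel \<rightarrow>\<^sub>M count_space UNIV"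
proof (induction cs)
  case (Cons c cs)
  have "{x \<in> space borel. dist x c < e} \<in> sets borel"
    using borel_open[OF open_ball[of c e]] by (simp add: ball_def dist_commute)
  moreover have "(\<lambda>x. Suc (near_index cs e x)) \<in> borel \<rightarrow>\<^sub>M count_space UNIV"
    using measurable_compose[OF Cons measurable_count_space[of Suc UNIV]] by (simp add: comp_def)
  ultimately have "(\<lambda>x. if dist x c < e then 0 else Suc (near_index cs e x)) \<in> borel \<rightarrow>\<^sub>M count_space UNIV"
    by (intro measurable_If) auto
  then show ?case by simp
qed simp

lemma measurable_map_upt:
  fixes h :: "nat \<Rightarrow> 'b \<Rightarrow> nat"
  assumes "\<And>j. j < K \<Longrightarrow> h j \<in> M \<rightarrow>\<^sub>M count_space UNIV"
  shows "(\<lambda>\<omega>. map (\<lambda>j. h j \<omega>) [0..<K]) \<in> M \<rightarrow>\<^sub>M count_space UNIV"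
proof (subst measurable_count_space_eq2_countable, intro conjI ballI)
  show "(\<lambda>\<omega>. map (\<lambda>j. h j \<omega>) [0..<K]) \<in> space M \<rightarrow> UNIV" by simp
  fix l :: "nat list"
  show "(\<lambda>\<omega>. map (\<lambda>j. h j \<omega>) [0..<K]) -` {l} \<inter> space M \<in> sets M"
  proof (cases "length l = K")
    case True
    have "(\<lambda>\<omega>. map (\<lambda>j. h j \<omega>) [0..<K]) -` {l} \<inter> space M = {\<omega> \<in> space M. \<forall>j\<in>{..<K}. h j \<omega> = l ! j}"
    proof (intro equalityI subsetI)
      fix \<omega> assume "\<omega> \<in> (\<lambda>\<omega>. map (\<lambda>j. h j \<omega>) [0..<K]) -` {l} \<inter> space M"
      then have "map (\<lambda>j. h j \<omega>) [0..<K] = l" "\<omega> \<in> space M" by auto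
      then show "\<omega> \<in> {\<omega> \<in> space M. \<forall>j\<in>{..<K}. h j \<omega> = l ! j}" by auto
    next
      fix \<omega> assume "\<omega> \<in> {\<omega> \<in> space M. \<forall>j\<in>{..<K}. h j \<omega> = l ! j}"
      then have "\<forall>j<K. h j \<omega> = l ! j" "\<omega> \<in> space M" by auto
      then have "map (\<lambda>j. h j \<omega>) [0..<K] = l" using True by (simp add: list_eq_iff_nth_eq)
      then show "\<omega> \<in> (\<lambda>\<omega>. map (\<lambda>j. h j \<omega>) [0..<K]) -` {l} \<inter> space M" using \<open>\<omega> \<in> space M\<close> by auto
    qed
    also have "\<dots> \<in> sets M"
    proof (rule sets.sets_Collect_finite_All)
      fix j assume "j \<in> {..<K}"
      then have "h j \<in> M \<rightarrow>\<^sub>M count_space UNIV" using assms by auto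
      then have "h j -` {l ! j} \<inter> space M \<in> sets M"
        unfolding measurable_count_space_eq2_countable by blast
      moreover have "{\<omega> \<in> space M. h j \<omega> = l ! j} = h j -` {l ! j} \<inter> space M" by auto
      ultimately show "{\<omega> \<in> space M. h j \<omega> = l ! j} \<in> sets M" by simp
    next
      show "finite {..<K}" by simp
    qed
    finally show ?thesis .
  next
    case False
    then have "(\<lambda>\<omega>. map (\<lambda>j. h j \<omega>) [0..<K]) -` {l} \<inter> space M = {}" by (auto dest: arg_cong[where f=length])
    then show ?thesis by simp
  qed
qed

lemma compact_finite_net:
  assumes "compact G" and "e > 0"
  shows "\<exists>cs. set cs \<subseteq> G \<and> (\<forall>x\<in>G. \<exists>c\<in>set cs. dist x c < e)"
proof -
  obtain D where D: "D \<subseteq> G" "finite D" and cover: "G \<subseteq> (\<Union>c\<in>D. ball c e)"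
    using compactE_image[OF \<open>compact G\<close>, of G "\<lambda>c. ball c e"] \<open>e > 0\<close> by force
  obtain cs where cs: "set cs = D" using \<open>finite D\<close> finite_list by blast
  have "\<exists>c\<in>set cs. dist x c < e" if "x \<in> G" for x
  proof -
    obtain c where "c \<in> D" "x \<in> ball c e" using cover \<open>x \<in> G\<close> by blast
    then show ?thesis using cs by (auto simp: dist_commute)
  qed
  then show ?thesis using cs D by blast
qed

text \<open>Rounding every coordinate to a finite \<open>1/(k+1)\<close>-net of \<open>G\<close> gives countably-valued
  measurable approximations that converge pointwise.\<close>
lemma borel_measurable_sequentially_continuous_compose:
  fixes f :: "nat \<Rightarrow> 'b \<Rightarrow> 'a::metric_space" and \<Phi> :: "(nat \<Rightarrow> 'a) \<Rightarrow> real"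
  assumes "compact G"
    and f: "\<And>j. j < K \<Longrightarrow> f j \<in> M \<rightarrow>\<^sub>M borel"
    and f_mem: "\<And>j \<omega>. j < K \<Longrightarrow> \<omega> \<in> space M \<Longrightarrow> f j \<omega> \<in> G"
    and \<Phi>: "\<And>c v. (\<And>j k. j < K \<Longrightarrow> c k j \<in> G) \<Longrightarrow> (\<And>j. j < K \<Longrightarrow> v j \<in> G)
              \<Longrightarrow> (\<And>j. j < K \<Longrightarrow> (\<lambda>k. c k j) \<longlonglongrightarrow> v j) \<Longrightarrow> (\<lambda>k. \<Phi> (c k)) \<longlonglongrightarrow> \<Phi> v"
  shows "(\<lambda>\<omega>. \<Phi> (\<lambda>j. f j \<omega>)) \<in> borel_measurable M"
proof -
  define e where "e k = inverse (real (Suc k))" for k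
  have "\<exists>cs. set cs \<subseteq> G \<and> (\<forall>x\<in>G. \<exists>c\<in>set cs. dist x c < e k)" for k
    using compact_finite_net[OF \<open>compact G\<close>] by (simp add: e_def)
  then obtain net where net: "\<And>k. set (net k) \<subseteq> G" "\<And>k x. x \<in> G \<Longrightarrow> \<exists>c\<in>set (net k). dist x c < e k"
    by metis
  define \<Psi> where "\<Psi> k l = \<Phi> (\<lambda>j. if j < K then net k ! (l ! j) else undefined)" for k l
  define c where "c k \<omega> = (\<lambda>j. if j < K then net k ! near_index (net k) (e k) (f j \<omega>) else undefined)"
    for k \<omega>
  have near: "near_index (net k) (e k) (f j \<omega>) < length (net k)"
      "dist (f j \<omega>) (net k ! near_index (net k) (e k) (f j \<omega>)) < e k"
    if "j < K" "\<omega> \<in> space M" for j k \<omega>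
    using near_index[OF net(2)[OF f_mem[OF that]]] by blast+
  show ?thesis
  proof (rule borel_measurable_LIMSEQ_real[where u = "\<lambda>k \<omega>. \<Phi> (c k \<omega>)"])
    fix k
    have "(\<lambda>\<omega>. map (\<lambda>j. near_index (net k) (e k) (f j \<omega>)) [0..<K]) \<in> M \<rightarrow>\<^sub>M count_space UNIV"
      using measurable_compose[OF f measurable_near_index] by (intro measurable_map_upt) (simp add: comp_def)
    then have "(\<lambda>\<omega>. \<Psi> k (map (\<lambda>j. near_index (net k) (e k) (f j \<omega>)) [0..<K])) \<in> borel_measurable M"
      by (rule measurable_compose_countable'[where I = UNIV and f = "\<lambda>l \<omega>. \<Psi> k l", rotated]) simp_all
    moreover have "\<Psi> k (map (\<lambda>j. near_index (net k) (e k) (f j \<omega>)) [0..<K]) = \<Phi> (c k \<omega>)" for \<omega>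
      unfolding \<Psi>_def c_def by (rule arg_cong[where f = \<Phi>]) auto
    ultimately show "(\<lambda>\<omega>. \<Phi> (c k \<omega>)) \<in> borel_measurable M" by simp
  next
    fix \<omega> assume \<omega>: "\<omega> \<in> space M"
    show "(\<lambda>k. \<Phi> (c k \<omega>)) \<longlonglongrightarrow> \<Phi> (\<lambda>j. f j \<omega>)"
    proof (rule \<Phi>)
      show "c k \<omega> j \<in> G" if "j < K" for j k
        using near(1)[OF that \<omega>] net(1) that unfolding c_def by (auto intro: nth_mem)
      show "f j \<omega> \<in> G" if "j < K" for j
        using f_mem[OF that \<omega>] .
      show "(\<lambda>k. c k \<omega> j) \<longlonglongrightarrow> f j \<omega>" if "j < K" for j
      proof -
        have le: "dist (c k \<omega> j) (f j \<omega>) \<le> e k" for k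
          using near(2)[OF that \<omega>, of k] that unfolding c_def by (simp add: dist_commute)
        have "e \<longlonglongrightarrow> 0" unfolding e_def by (rule LIMSEQ_inverse_real_of_nat)
        have "(\<lambda>k. dist (c k \<omega> j) (f j \<omega>)) \<longlonglongrightarrow> 0"
          by (rule tendsto_sandwich[OF always_eventually always_eventually tendsto_const \<open>e \<longlonglongrightarrow> 0\<close>])
            (simp_all add: le)
        then show ?thesis by (rule tendsto_dist_iff[THEN iffD2])
      qed
    qed
  qed
qed

lemma tendsto_prod_list:
  fixes F :: "'i \<Rightarrow> 'b \<Rightarrow> 'a::real_normed_algebra_1"
  assumes "\<And>i. i \<in> set is \<Longrightarrow> (F i \<longlongrightarrow> L i) net"
  shows "((\<lambda>k. prod_list (map (\<lambda>i. F i k) is)) \<longlongrightarrow> prod_list (map L is)) net"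
  using assms by (induction "is") (auto intro: tendsto_mult)

lemma continuous_on_compose_time_space:
  assumes "continuous_on ({0<..} \<times> G) (\<lambda>(t, x). F t x)"
    and "continuous_on S a" "continuous_on S b" "\<And>x. x \<in> S \<Longrightarrow> a x > 0 \<and> b x \<in> G"
  shows "continuous_on S (\<lambda>x. F (a x) (b x))"
  using continuous_on_compose2[OF assms(1), of S "\<lambda>x. (a x, b x)"] assms(2-4)
  by (auto intro: continuous_intros)

lemma continuous_on_compose_time_slice:
  assumes "continuous_on ({0<..} \<times> G) (\<lambda>(t, x). F t x)" and "t > 0"
    and "continuous_on S b" "\<And>x. x \<in> S \<Longrightarrow> b x \<in> G"
  shows "continuous_on S (\<lambda>x. F t (b x))"
  using assms by (intro continuous_on_compose_time_space[OF assms(1)]) (auto intro: continuous_intros)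

lemma continuous_on_time_slice:
  assumes "continuous_on ({0<..} \<times> G) (\<lambda>(t, x). F t x)" and "t > 0"
  shows "continuous_on G (F t)"
  using continuous_on_compose_time_slice[OF assms continuous_on_id] by simp

lemma exp_scaleR_add:
  fixes X :: "'a::{real_normed_algebra_1,banach}"
  shows "exp ((s + t) *\<^sub>R X) = exp (s *\<^sub>R X) * exp (t *\<^sub>R X)"
  by (simp add: scaleR_add_left exp_add_commuting mult_scaleR_left mult_scaleR_right)

lemma continuous_on_exp_scaleR_mult:
  fixes X :: "'a::{real_normed_algebra_1,banach}"
  shows "continuous_on S (\<lambda>x. exp (fst x *\<^sub>R X) * snd x)"
proof -
  have "continuous_on UNIV (\<lambda>s::real. exp (s *\<^sub>R X))"
    by (rule continuous_on_vector_derivative)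
      (rule has_vector_derivative_at_within[OF exp_scaleR_has_vector_derivative_right])
  from continuous_on_compose2[OF this continuous_on_fst[OF continuous_on_id]]
  have "continuous_on S (\<lambda>x. exp (fst x *\<^sub>R X))" by simp
  then show ?thesis by (intro continuous_on_mult continuous_on_snd continuous_on_id)
qed

definition Z_word :: "'a::ring_1 list \<Rightarrow> nat \<Rightarrow> (nat \<Rightarrow> 'a) \<Rightarrow> 'a \<Rightarrow> 'a" where
  "Z_word xs g w z = prod_list
     (map (\<lambda>j. ginv (w (2*g+j)) * (xs @ [z]) ! j * w (2*g+j)) [0..<Suc (length xs)]
      @ map (\<lambda>i. gcomm (w (2*i)) (w (2*i+1))) [0..<g])"

lemma Zfun_snoc:
  "Zfun \<mu> p g t (xs @ [z]) = (\<integral>w. p t (Z_word xs g w z) \<partial>(Pi\<^sub>M {..<2*g + Suc (length xs)} (\<lambda>_. \<mu>)))"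
  unfolding Zfun_def Z_word_def by simp

lemma Z_word_cong:
  assumes "\<And>j. j < 2*g + Suc (length xs) \<Longrightarrow> w j = w' j"
  shows "Z_word xs g w z = Z_word xs g w' z"
  unfolding Z_word_def using assms
  by (intro arg_cong[where f = prod_list] arg_cong2[where f = append] map_cong) auto

lemma Z_word_split:
  "Z_word xs g w z = prod_list (map (\<lambda>j. ginv (w (2*g+j)) * xs ! j * w (2*g+j)) [0..<length xs])
     * (ginv (w (2*g + length xs)) * z * w (2*g + length xs))
     * prod_list (map (\<lambda>i. gcomm (w (2*i)) (w (2*i+1))) [0..<g])"
proof -
  have "map (\<lambda>j. ginv (w (2*g+j)) * (xs @ [z]) ! j * w (2*g+j)) [0..<length xs]
      = map (\<lambda>j. ginv (w (2*g+j)) * xs ! j * w (2*g+j)) [0..<length xs]"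
    by (rule map_cong[OF refl]) (auto simp: nth_append)
  moreover have "[0..<Suc (length xs)] = [0..<length xs] @ [length xs]" by simp
  ultimately show ?thesis
    unfolding Z_word_def by (simp only: map_append prod_list.append) (simp add: mult.assoc)
qed

section \<open>Compact groups of units with Haar measure\<close>

locale unit_subgroup =
  fixes G :: "'a::{real_normed_algebra_1,banach} set"
  assumes subgroup: "subgroup_of_units G"
begin

lemma one_mem: "1 \<in> G"
  using subgroup unfolding subgroup_of_units_def by blast

lemma mult_mem: "x \<in> G \<Longrightarrow> y \<in> G \<Longrightarrow> x * y \<in> G"
  using subgroup unfolding subgroup_of_units_def by blast

lemma ginv:
  assumes "x \<in> G"
  shows ginv_mem: "ginv x \<in> G" and right_inverse: "x * ginv x = 1" and left_inverse: "ginv x * x = 1"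
proof -
  obtain y where y: "y \<in> G" "x * y = 1" "y * x = 1"
    using subgroup assms unfolding subgroup_of_units_def by blast
  have "ginv x = y" unfolding ginv_def
  proof (rule the_equality)
    show "y' = y" if "x * y' = 1 \<and> y' * x = 1" for y'
      using that y by (metis mult.assoc mult_1_left mult_1_right)
  qed (use y in simp)
  then show "ginv x \<in> G" "x * ginv x = 1" "ginv x * x = 1" using y by simp_all
qed

lemma ginv_cancel_left: "x \<in> G \<Longrightarrow> ginv x * (x * y) = y"
  by (simp add: mult.assoc[symmetric] left_inverse)

lemma prod_list_mem: "(\<And>a. a \<in> set l \<Longrightarrow> a \<in> G) \<Longrightarrow> prod_list l \<in> G"
  by (induction l) (auto intro: mult_mem one_mem)

lemma gcomm_mem: "a \<in> G \<Longrightarrow> b \<in> G \<Longrightarrow> gcomm a b \<in> G"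
  unfolding gcomm_def by (intro mult_mem ginv_mem)

lemma exp_mem: "X \<in> lie_alg G \<Longrightarrow> exp (t *\<^sub>R X) \<in> G"
  unfolding lie_alg_def by blast

lemma has_real_derivative_exp_translate:
  assumes deriv: "\<And>z. z \<in> G \<Longrightarrow> ((\<lambda>\<sigma>. f (exp (\<sigma> *\<^sub>R X) * z)) has_real_derivative f' z) (at 0)"
    and "X \<in> lie_alg G" and "y \<in> G"
  shows "((\<lambda>\<sigma>. f (exp (\<sigma> *\<^sub>R X) * y)) has_real_derivative f' (exp (s *\<^sub>R X) * y)) (at s)"
proof -
  have "((\<lambda>\<sigma>. f (exp (\<sigma> *\<^sub>R X) * (exp (s *\<^sub>R X) * y))) has_real_derivative f' (exp (s *\<^sub>R X) * y)) (at 0)"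
    using deriv mult_mem exp_mem assms by blast
  then have "((\<lambda>\<sigma>. f (exp ((\<sigma> + s) *\<^sub>R X) * y)) has_real_derivative f' (exp (s *\<^sub>R X) * y)) (at 0)"
    by (simp add: exp_scaleR_add mult.assoc)
  then show ?thesis using DERIV_shift[of "\<lambda>\<sigma>. f (exp (\<sigma> *\<^sub>R X) * y)" _ 0 s] by simp
qed

lemma continuous_on_left_translate:
  assumes "g \<in> G" and "continuous_on G h"
  shows "continuous_on G (\<lambda>y. h (g * y))"
  using continuous_on_compose2[OF assms(2), of G "\<lambda>y. g * y"] assms(1)
  by (auto intro: continuous_intros mult_mem)

lemma continuous_on_exp_translate:
  assumes "X \<in> lie_alg G" and "continuous_on G h" and "S \<subseteq> UNIV \<times> G"
  shows "continuous_on S (\<lambda>x. h (exp (fst x *\<^sub>R X) * snd x))"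
proof -
  have "(\<lambda>x. exp (fst x *\<^sub>R X) * snd x) ` S \<subseteq> G"
    using assms(1,3) by (auto simp: subset_iff mem_Times_iff intro: mult_mem exp_mem)
  then show ?thesis
    using continuous_on_compose2[OF assms(2) continuous_on_exp_scaleR_mult[of S X]] by simp
qed

lemma continuous_on_time_slice_right_translate:
  assumes "continuous_on ({0<..} \<times> G) (\<lambda>(t, x). F t x)" and "t > 0" and "w \<in> G"
  shows "continuous_on G (\<lambda>v. F t (v * w))"
  using assms by (intro continuous_on_compose_time_slice[OF assms(1,2)])
    (auto intro: continuous_intros mult_mem)

lemma continuous_on_time_reflect:
  fixes F :: "real \<Rightarrow> 'a \<Rightarrow> 'b::topological_space"
  assumes "continuous_on ({0<..} \<times> G) (\<lambda>(t, x). F t x)"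
    and "S \<subseteq> {0<..<R} \<times> G" and "w \<in> G"
  shows "continuous_on S (\<lambda>x. F (fst x) (snd x))"
    and "continuous_on S (\<lambda>x. F (R - fst x) (snd x * w))"
proof -
  have pos: "fst x > 0 \<and> snd x \<in> G" "R - fst x > 0 \<and> snd x * w \<in> G" if "x \<in> S" for x
  proof -
    have "x \<in> {0<..<R} \<times> G" using assms(2) that by blast
    then show "fst x > 0 \<and> snd x \<in> G" "R - fst x > 0 \<and> snd x * w \<in> G"
      using mult_mem[OF _ assms(3)] by (auto simp: mem_Times_iff)
  qed
  show "continuous_on S (\<lambda>x. F (fst x) (snd x))"
    by (rule continuous_on_compose_time_space[OF assms(1)]) (use pos in \<open>auto intro!: continuous_intros\<close>)
  show "continuous_on S (\<lambda>x. F (R - fst x) (snd x * w))"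
    by (rule continuous_on_compose_time_space[OF assms(1)]) (use pos in \<open>auto intro!: continuous_intros\<close>)
qed

lemma Z_word_mem:
  assumes "set xs \<subseteq> G" and "\<And>j. j < 2*g + Suc (length xs) \<Longrightarrow> w j \<in> G" and "z \<in> G"
  shows "Z_word xs g w z \<in> G"
  unfolding Z_word_def using assms
  by (intro prod_list_mem) (auto simp: nth_append intro!: mult_mem ginv_mem gcomm_mem)

end

locale compact_haar_group = unit_subgroup G for G :: "'a::{real_normed_algebra_1,banach} set" +
  fixes \<mu> :: "'a measure"
  assumes compact: "compact G" and haar: "haar_prob G \<mu>"
begin

lemma space_haar: "space \<mu> = G" and sets_haar: "sets \<mu> = sets (restrict_space borel G)"
  and prob_space_haar: "prob_space \<mu>"
  using haar unfolding haar_prob_def by auto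

lemma finite_measure_haar: "finite_measure \<mu>"
  using prob_space_haar by (simp add: prob_space_def)

lemma measurable_haar_borel: "f \<in> M \<rightarrow>\<^sub>M \<mu> \<Longrightarrow> f \<in> M \<rightarrow>\<^sub>M borel"
  using measurable_compose[OF _ borel_measurable_continuous_on_restrict[OF continuous_on_id]]
    measurable_cong_sets[OF refl sets_haar] by blast

lemma borel_measurable_continuous: "continuous_on G f \<Longrightarrow> f \<in> borel_measurable \<mu>"
  using measurable_cong_sets[OF sets_haar refl] borel_measurable_continuous_on_restrict by blast

lemma measurable_pair_PiM_coordinate:
  "(\<lambda>\<omega>. if j < N then snd \<omega> j else fst \<omega>) \<in> \<mu> \<Otimes>\<^sub>M Pi\<^sub>M {..<N} (\<lambda>_. \<mu>) \<rightarrow>\<^sub>M borel"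
proof (cases "j < N")
  case True
  have "(\<lambda>\<omega>. snd \<omega> j) \<in> \<mu> \<Otimes>\<^sub>M Pi\<^sub>M {..<N} (\<lambda>_. \<mu>) \<rightarrow>\<^sub>M \<mu>"
    using measurable_compose[OF measurable_snd measurable_component_singleton[of j "{..<N}" "\<lambda>_. \<mu>"]] True
    by simp
  then have "(\<lambda>\<omega>. snd \<omega> j) \<in> \<mu> \<Otimes>\<^sub>M Pi\<^sub>M {..<N} (\<lambda>_. \<mu>) \<rightarrow>\<^sub>M borel"
    by (rule measurable_haar_borel)
  then show ?thesis by (simp only: True if_True)
next
  case False
  have "fst \<in> \<mu> \<Otimes>\<^sub>M Pi\<^sub>M {..<N} (\<lambda>_. \<mu>) \<rightarrow>\<^sub>M borel"
    by (rule measurable_haar_borel[OF measurable_fst])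
  then show ?thesis by (simp only: False if_False)
qed

lemma pair_PiM_coordinate_mem:
  assumes "\<omega> \<in> space (\<mu> \<Otimes>\<^sub>M Pi\<^sub>M {..<N} (\<lambda>_. \<mu>))"
  shows "(if j < N then snd \<omega> j else fst \<omega>) \<in> G"
proof -
  have "fst \<omega> \<in> G" "snd \<omega> \<in> space (Pi\<^sub>M {..<N} (\<lambda>_. \<mu>))"
    using assms by (auto simp: space_pair_measure space_haar mem_Times_iff)
  moreover have "w j \<in> G" if "w \<in> space (Pi\<^sub>M {..<N} (\<lambda>_. \<mu>))" "j < N" for w
    using that by (auto simp: space_PiM space_haar)
  ultimately show ?thesis by simp
qed

lemma continuous_bounded:
  fixes f :: "'a \<Rightarrow> real"
  assumes "continuous_on G f"
  obtains B where "\<And>x. x \<in> G \<Longrightarrow> \<bar>f x\<bar> \<le> B"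
  using compact_imp_bounded[OF compact_continuous_image[OF assms compact]]
  by (force simp: bounded_iff)

lemma integrable_continuous:
  fixes f :: "'a \<Rightarrow> real"
  assumes "continuous_on G f"
  shows "integrable \<mu> f"
proof -
  obtain B where "\<And>x. x \<in> G \<Longrightarrow> \<bar>f x\<bar> \<le> B" using continuous_bounded[OF assms] by blast
  then show ?thesis
    using borel_measurable_continuous[OF assms] space_haar
    by (intro finite_measure.integrable_const_bound[OF finite_measure_haar, where B = B] AE_I2) auto
qed

lemma measurable_left_translate: "g \<in> G \<Longrightarrow> (\<lambda>y. g * y) \<in> \<mu> \<rightarrow>\<^sub>M \<mu>"
  using measurable_restrict_space2[OF _ borel_measurable_continuous_on_restrict[of G "\<lambda>y. g * y"]]
    measurable_cong_sets[OF sets_haar sets_haar]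
  by (auto simp: space_restrict_space intro: mult_mem continuous_intros)

lemma distr_left_translate:
  assumes "g \<in> G"
  shows "distr \<mu> \<mu> (\<lambda>y. g * y) = \<mu>"
proof (rule measure_eqI)
  fix A assume "A \<in> sets (distr \<mu> \<mu> (\<lambda>y. g * y))"
  then have A: "A \<in> sets \<mu>" by simp
  then have "A \<subseteq> G" using sets.sets_into_space space_haar by blast
  have "(\<lambda>y. g * y) -` A \<inter> space \<mu> = (\<lambda>y. ginv g * y) ` A"
  proof (intro equalityI subsetI)
    fix y assume "y \<in> (\<lambda>y. g * y) -` A \<inter> space \<mu>"
    then have "g * y \<in> A" and "ginv g * (g * y) = y"
      using assms ginv_cancel_left space_haar by auto
    then show "y \<in> (\<lambda>y. ginv g * y) ` A" by (metis image_eqI)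
  next
    fix y assume "y \<in> (\<lambda>y. ginv g * y) ` A"
    then obtain a where "a \<in> A" "y = ginv g * a" by blast
    moreover have "g * (ginv g * a) = a"
      using assms by (simp add: mult.assoc[symmetric] right_inverse)
    ultimately show "y \<in> (\<lambda>y. g * y) -` A \<inter> space \<mu>"
      using \<open>A \<subseteq> G\<close> assms by (auto simp: space_haar intro: mult_mem ginv_mem)
  qed
  then show "emeasure (distr \<mu> \<mu> (\<lambda>y. g * y)) A = emeasure \<mu> A"
    using emeasure_distr[OF measurable_left_translate[OF assms] A] haar ginv_mem[OF assms] A
    unfolding haar_prob_def by simp
qed simp

lemma integral_left_translate:
  fixes f :: "'a \<Rightarrow> real"
  assumes "g \<in> G" and "f \<in> borel_measurable \<mu>"
  shows "(\<integral>y. f (g * y) \<partial>\<mu>) = (\<integral>y. f y \<partial>\<mu>)"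
  using integral_distr[OF measurable_left_translate assms(2)] distr_left_translate assms(1) by simp

lemma continuous_on_ginv: "continuous_on G ginv"
proof -
  obtain B where B: "\<And>x. x \<in> G \<Longrightarrow> norm x \<le> B"
    using compact_imp_bounded[OF compact] unfolding bounded_iff by blast
  have "B \<ge> 0" using B[OF one_mem] norm_ge_zero order_trans by blast
  have lip: "dist (ginv x) (ginv y) \<le> B * B * dist x y" if "x \<in> G" "y \<in> G" for x y
  proof -
    have "ginv x * (y - x) * ginv y = ginv x * (y * ginv y) - (ginv x * x) * ginv y"
      by (simp add: algebra_simps)
    also have "\<dots> = ginv x - ginv y"
      using that by (simp only: right_inverse left_inverse mult_1_left mult_1_right)
    finally have "norm (ginv x - ginv y) = norm (ginv x * (y - x) * ginv y)"
      by simp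
    also have "\<dots> \<le> norm (ginv x) * norm (y - x) * norm (ginv y)"
      by (metis norm_mult_ineq mult_right_mono norm_ge_zero order_trans)
    also have "\<dots> \<le> B * norm (y - x) * B"
      using B ginv_mem that \<open>B \<ge> 0\<close> by (intro mult_mono) auto
    finally show ?thesis by (simp add: dist_norm norm_minus_commute algebra_simps)
  qed
  show ?thesis
    by (intro lipschitz_on_continuous_on[of "B * B"] lipschitz_onI) (simp_all add: lip)
qed

lemma integrable_time_slice_product:
  fixes F H :: "real \<Rightarrow> 'a \<Rightarrow> real"
  assumes "continuous_on ({0<..} \<times> G) (\<lambda>(t, x). F t x)" and "continuous_on ({0<..} \<times> G) (\<lambda>(t, x). H t x)"
    and "t > 0" and "r > 0" and "w \<in> G"
  shows "integrable \<mu> (\<lambda>v. F t v * H r (v * w))"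
  by (intro integrable_continuous continuous_on_mult continuous_on_time_slice[OF assms(1,3)]
      continuous_on_time_slice_right_translate[OF assms(2,4,5)])

text \<open>By left invariance \<open>\<integral> f(e\<^sup>s\<^sup>Xy) g(e\<^sup>s\<^sup>Xy) dy\<close> does not depend on \<open>s\<close>; differentiate at \<open>s = 0\<close>.\<close>
lemma integration_by_parts_exp_translate:
  fixes f f' g g' :: "'a \<Rightarrow> real"
  assumes X: "X \<in> lie_alg G"
    and cont: "continuous_on G f" "continuous_on G f'" "continuous_on G g" "continuous_on G g'"
    and df: "\<And>z. z \<in> G \<Longrightarrow> ((\<lambda>\<sigma>. f (exp (\<sigma> *\<^sub>R X) * z)) has_real_derivative f' z) (at 0)"
    and dg: "\<And>z. z \<in> G \<Longrightarrow> ((\<lambda>\<sigma>. g (exp (\<sigma> *\<^sub>R X) * z)) has_real_derivative g' z) (at 0)"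
  shows "(\<integral>y. f' y * g y + f y * g' y \<partial>\<mu>) = 0"
proof -
  define F where "F s y = f (exp (s *\<^sub>R X) * y) * g (exp (s *\<^sub>R X) * y)" for s y
  define D where "D s y = f' (exp (s *\<^sub>R X) * y) * g (exp (s *\<^sub>R X) * y)
    + g' (exp (s *\<^sub>R X) * y) * f (exp (s *\<^sub>R X) * y)" for s y
  have "((\<lambda>s. \<integral>y. F s y \<partial>\<mu>) has_real_derivative (\<integral>y. D 0 y \<partial>\<mu>)) (at 0)"
  proof (rule has_real_derivative_integral[OF finite_measure_haar, of "-1" 0 1])
    show "((\<lambda>s. F s y) has_real_derivative D s y) (at s)" if "y \<in> space \<mu>" for s y
      using that unfolding F_def D_def space_haar
      by (intro DERIV_mult has_real_derivative_exp_translate[OF df X] has_real_derivative_exp_translate[OF dg X])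
    show "continuous_on ({-1..1} \<times> space \<mu>) (\<lambda>(s, y). D s y)"
      unfolding D_def space_haar case_prod_beta
      by (intro continuous_intros continuous_on_exp_translate[OF X] cont) auto
    show "integrable \<mu> (F s)" for s
      unfolding F_def
      by (intro integrable_continuous continuous_intros continuous_on_left_translate[OF exp_mem[OF X]] cont)
    show "integrable \<mu> (D 0)"
      unfolding D_def
      by (intro integrable_continuous continuous_intros continuous_on_left_translate[OF exp_mem[OF X]] cont)
  qed (simp_all add: compact space_haar)
  moreover have "(\<integral>y. F s y \<partial>\<mu>) = (\<integral>y. f y * g y \<partial>\<mu>)" for s
    unfolding F_def using cont
    by (intro integral_left_translate[of _ "\<lambda>y. f y * g y"] exp_mem X
        borel_measurable_continuous continuous_intros)
  then have "((\<lambda>s. \<integral>y. F s y \<partial>\<mu>) has_real_derivative 0) (at 0)"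
    by simp
  ultimately have "(\<integral>y. D 0 y \<partial>\<mu>) = 0"
    by (rule DERIV_unique)
  then show ?thesis unfolding D_def by (simp add: mult.commute)
qed

lemma tendsto_ginv:
  assumes "\<And>k. c k \<in> G" and "v \<in> G" and "c \<longlonglongrightarrow> v"
  shows "(\<lambda>k. ginv (c k)) \<longlonglongrightarrow> ginv v"
  using assms by (intro continuous_on_tendsto_compose[OF continuous_on_ginv]) auto

lemma tendsto_Z_word:
  assumes xs: "set xs \<subseteq> G"
    and c: "\<And>j k. j < 2*g + Suc (length xs) \<Longrightarrow> c k j \<in> G"
    and v: "\<And>j. j < 2*g + Suc (length xs) \<Longrightarrow> v j \<in> G"
    and lim: "\<And>j. j < 2*g + Suc (length xs) \<Longrightarrow> (\<lambda>k. c k j) \<longlonglongrightarrow> v j"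
    and z: "\<And>k. z k \<in> G" "z0 \<in> G" "z \<longlonglongrightarrow> z0"
  shows "(\<lambda>k. Z_word xs g (c k) (z k)) \<longlonglongrightarrow> Z_word xs g v z0"
proof -
  have conj: "(\<lambda>k. ginv (c k (2*g+j)) * (xs @ [z k]) ! j * c k (2*g+j))
      \<longlonglongrightarrow> ginv (v (2*g+j)) * (xs @ [z0]) ! j * v (2*g+j)" if "j < Suc (length xs)" for j
  proof -
    have "(\<lambda>k. (xs @ [z k]) ! j) \<longlonglongrightarrow> (xs @ [z0]) ! j"
      using that z(3) by (cases "j < length xs") (auto simp: nth_append)
    then show ?thesis
      using that c v lim by (intro tendsto_mult tendsto_ginv) auto
  qed
  have comm: "(\<lambda>k. gcomm (c k (2*i)) (c k (2*i+1))) \<longlonglongrightarrow> gcomm (v (2*i)) (v (2*i+1))" if "i < g" for i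
    unfolding gcomm_def using that c v lim by (intro tendsto_mult tendsto_ginv) auto
  show ?thesis
    unfolding Z_word_def prod_list.append
    by (rule tendsto_mult; rule tendsto_prod_list) (use conj comm in auto)
qed

end

section \<open>The heat kernel\<close>

locale heat_kernel_group = compact_haar_group G \<mu> for G :: "'a::{real_normed_algebra_1,banach} set" and \<mu> +
  fixes E :: "nat \<Rightarrow> 'a" and n :: nat and p :: "real \<Rightarrow> 'a \<Rightarrow> real"
  assumes heat_kernel: "heat_kernel G \<mu> E n p"
    and basis_mem: "\<And>i. i < n \<Longrightarrow> E i \<in> lie_alg G"
begin

lemma heat_kernel_pos: "t > 0 \<Longrightarrow> x \<in> G \<Longrightarrow> p t x > 0"
  using heat_kernel unfolding heat_kernel_def by blast

lemma heat_kernel_commute: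
  assumes "t > 0" "a \<in> G" "b \<in> G"
  shows "p t (a * b) = p t (b * a)"
proof -
  have "p t (b * (a * b) * ginv b) = p t (a * b)"
    using heat_kernel assms mult_mem unfolding heat_kernel_def by blast
  then show ?thesis using right_inverse[OF assms(3)] by (simp add: mult.assoc)
qed

lemma heat_equation:
  "t > 0 \<Longrightarrow> x \<in> G \<Longrightarrow> ((\<lambda>s. p s x) has_real_derivative 1/2 * laplacian E n (p t) x) (at t)"
  using heat_kernel unfolding heat_kernel_def by blast

lemma heat_kernel_delta:
  "continuous_on G f \<Longrightarrow> ((\<lambda>t. \<integral>x. p t x * f x \<partial>\<mu>) \<longlongrightarrow> f 1) (at_right 0)"
  using heat_kernel unfolding heat_kernel_def by blast

lemma heat_kernel_smooth:
  assumes "set ds \<subseteq> insert None (Some ` lie_alg G)"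
  shows "continuous_on ({0<..} \<times> G) (\<lambda>(t, x). hderiv ds p t x)"
    and "t > 0 \<Longrightarrow> x \<in> G \<Longrightarrow> X \<in> lie_alg G
      \<Longrightarrow> (\<lambda>s. hderiv ds p t (x * exp (s *\<^sub>R X))) differentiable (at 0)"
  using heat_kernel assms unfolding heat_kernel_def smooth_on_time_G_def by blast+

lemma continuous_heat_kernel: "continuous_on ({0<..} \<times> G) (\<lambda>(t, x). p t x)"
  using heat_kernel_smooth(1)[of "[]"] by simp

lemma continuous_lie_deriv_heat_kernel:
  "X \<in> lie_alg G \<Longrightarrow> continuous_on ({0<..} \<times> G) (\<lambda>(t, x). lie_deriv X (p t) x)"
  using heat_kernel_smooth(1)[of "[Some X]"] by (simp add: lie_deriv_def)

lemma continuous_lie_deriv2_heat_kernel: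
  "X \<in> lie_alg G \<Longrightarrow> continuous_on ({0<..} \<times> G) (\<lambda>(t, x). lie_deriv X (lie_deriv X (p t)) x)"
  using heat_kernel_smooth(1)[of "[Some X, Some X]"] by (simp add: lie_deriv_def)

lemma continuous_laplacian_heat_kernel:
  "continuous_on ({0<..} \<times> G) (\<lambda>(t, x). laplacian E n (p t) x)"
  unfolding laplacian_def case_prod_beta
  by (rule continuous_on_sum) (use continuous_lie_deriv2_heat_kernel[OF basis_mem] in \<open>simp add: case_prod_beta\<close>)

text \<open>Since \<open>p\<^sub>t\<close> is central, its left-invariant derivatives are also derivatives along left
  translations.\<close>
lemma has_real_derivative_heat_kernel_exp_translate:
  assumes "t > 0" "z \<in> G" "X \<in> lie_alg G"
  shows "((\<lambda>\<sigma>. p t (exp (\<sigma> *\<^sub>R X) * z)) has_real_derivative lie_deriv X (p t) z) (at 0)"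
proof -
  have "p t (exp (\<sigma> *\<^sub>R X) * z) = p t (z * exp (\<sigma> *\<^sub>R X))" for \<sigma>
    using heat_kernel_commute assms exp_mem by blast
  moreover have "(\<lambda>\<sigma>. p t (z * exp (\<sigma> *\<^sub>R X))) differentiable (at 0)"
    using heat_kernel_smooth(2)[of "[]"] assms by simp
  ultimately show ?thesis
    unfolding lie_deriv_def by (simp add: DERIV_deriv_iff_real_differentiable)
qed

lemma lie_deriv_heat_kernel_exp_commute:
  assumes "t > 0" "y \<in> G" "X \<in> lie_alg G"
  shows "lie_deriv X (p t) (exp (\<sigma> *\<^sub>R X) * y) = lie_deriv X (p t) (y * exp (\<sigma> *\<^sub>R X))"
proof -
  have "p t (exp (\<sigma> *\<^sub>R X) * y * exp (\<tau> *\<^sub>R X)) = p t (y * exp (\<sigma> *\<^sub>R X) * exp (\<tau> *\<^sub>R X))" for \<tau>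
  proof -
    have "p t (exp (\<sigma> *\<^sub>R X) * y * exp (\<tau> *\<^sub>R X)) = p t (y * exp (\<tau> *\<^sub>R X) * exp (\<sigma> *\<^sub>R X))"
      using heat_kernel_commute[OF assms(1) exp_mem[OF assms(3)] mult_mem[OF assms(2) exp_mem[OF assms(3)]]]
      by (simp add: mult.assoc)
    also have "\<dots> = p t (y * exp (\<sigma> *\<^sub>R X) * exp (\<tau> *\<^sub>R X))"
      by (metis exp_scaleR_add add.commute mult.assoc)
    finally show ?thesis .
  qed
  then show ?thesis unfolding lie_deriv_def by simp
qed

lemma has_real_derivative_lie_deriv_heat_kernel_exp_translate:
  assumes "t > 0" "z \<in> G" "X \<in> lie_alg G"
  shows "((\<lambda>\<sigma>. lie_deriv X (p t) (exp (\<sigma> *\<^sub>R X) * z))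
    has_real_derivative lie_deriv X (lie_deriv X (p t)) z) (at 0)"
proof -
  have "(\<lambda>\<sigma>. lie_deriv X (p t) (z * exp (\<sigma> *\<^sub>R X))) differentiable (at 0)"
    using heat_kernel_smooth(2)[of "[Some X]"] assms by (simp add: lie_deriv_def)
  then show ?thesis
    using lie_deriv_heat_kernel_exp_commute[OF assms]
    by (simp add: lie_deriv_def[of X "lie_deriv X (p t)"] DERIV_deriv_iff_real_differentiable)
qed

lemma integral_lie_deriv2_swap:
  assumes X: "X \<in> lie_alg G" and s: "s > 0" and r: "r > 0" and w: "w \<in> G"
  shows "(\<integral>v. lie_deriv X (lie_deriv X (p s)) v * p r (v * w) \<partial>\<mu>)
       = (\<integral>v. p s v * lie_deriv X (lie_deriv X (p r)) (v * w) \<partial>\<mu>)"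
proof -
  let ?f1 = "lie_deriv X (p s)" and ?f2 = "lie_deriv X (lie_deriv X (p s))"
  let ?g0 = "\<lambda>v. p r (v * w)" and ?g1 = "\<lambda>v. lie_deriv X (p r) (v * w)"
    and ?g2 = "\<lambda>v. lie_deriv X (lie_deriv X (p r)) (v * w)"
  have f0: "continuous_on G (p s)"
    using continuous_on_time_slice[OF continuous_heat_kernel s] .
  have f1: "continuous_on G ?f1"
    using continuous_on_time_slice[OF continuous_lie_deriv_heat_kernel[OF X] s] .
  have f2: "continuous_on G ?f2"
    using continuous_on_time_slice[OF continuous_lie_deriv2_heat_kernel[OF X] s] .
  have g0: "continuous_on G ?g0"
    using continuous_on_time_slice_right_translate[OF continuous_heat_kernel r w] .
  have g1: "continuous_on G ?g1"
    using continuous_on_time_slice_right_translate[OF continuous_lie_deriv_heat_kernel[OF X] r w] .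
  have g2: "continuous_on G ?g2"
    using continuous_on_time_slice_right_translate[OF continuous_lie_deriv2_heat_kernel[OF X] r w] .
  have dg0: "((\<lambda>\<sigma>. ?g0 (exp (\<sigma> *\<^sub>R X) * z)) has_real_derivative ?g1 z) (at 0)" if "z \<in> G" for z
    using has_real_derivative_heat_kernel_exp_translate[OF r mult_mem[OF that w] X]
    by (simp add: mult.assoc)
  have dg1: "((\<lambda>\<sigma>. ?g1 (exp (\<sigma> *\<^sub>R X) * z)) has_real_derivative ?g2 z) (at 0)" if "z \<in> G" for z
    using has_real_derivative_lie_deriv_heat_kernel_exp_translate[OF r mult_mem[OF that w] X]
    by (simp add: mult.assoc)
  have I1: "(\<integral>v. ?f2 v * ?g0 v + ?f1 v * ?g1 v \<partial>\<mu>) = 0"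
    by (rule integration_by_parts_exp_translate[OF X f1 f2 g0 g1
          has_real_derivative_lie_deriv_heat_kernel_exp_translate[OF s _ X] dg0])
  have I2: "(\<integral>v. ?f1 v * ?g1 v + p s v * ?g2 v \<partial>\<mu>) = 0"
    by (rule integration_by_parts_exp_translate[OF X f0 f1 g1 g2
          has_real_derivative_heat_kernel_exp_translate[OF s _ X] dg1])
  have i1: "integrable \<mu> (\<lambda>v. ?f2 v * ?g0 v)" and i2: "integrable \<mu> (\<lambda>v. ?f1 v * ?g1 v)"
    and i3: "integrable \<mu> (\<lambda>v. p s v * ?g2 v)"
    by (intro integrable_continuous continuous_on_mult f0 f1 f2 g0 g1 g2)+
  show ?thesis
    using I1 I2 Bochner_Integration.integral_add[OF i1 i2] Bochner_Integration.integral_add[OF i2 i3]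
    by simp
qed

lemma integral_laplacian_swap:
  assumes s: "s > 0" and r: "r > 0" and w: "w \<in> G"
  shows "(\<integral>v. laplacian E n (p s) v * p r (v * w) \<partial>\<mu>)
       = (\<integral>v. p s v * laplacian E n (p r) (v * w) \<partial>\<mu>)"
proof -
  have E: "E i \<in> lie_alg G" if "i \<in> {..<n}" for i
    using basis_mem that by simp
  have "(\<integral>v. laplacian E n (p s) v * p r (v * w) \<partial>\<mu>)
      = (\<Sum>i<n. \<integral>v. lie_deriv (E i) (lie_deriv (E i) (p s)) v * p r (v * w) \<partial>\<mu>)"
    unfolding laplacian_def sum_distrib_right
    by (rule Bochner_Integration.integral_sum)
      (rule integrable_time_slice_product[OF continuous_lie_deriv2_heat_kernel[OF E] continuous_heat_kernel s r w])
  also have "\<dots> = (\<Sum>i<n. \<integral>v. p s v * lie_deriv (E i) (lie_deriv (E i) (p r)) (v * w) \<partial>\<mu>)"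
    using integral_lie_deriv2_swap[OF E s r w] by simp
  also have "\<dots> = (\<integral>v. p s v * laplacian E n (p r) (v * w) \<partial>\<mu>)"
    unfolding laplacian_def sum_distrib_left
    by (rule Bochner_Integration.integral_sum[symmetric])
      (rule integrable_time_slice_product[OF continuous_heat_kernel continuous_lie_deriv2_heat_kernel[OF E] s r w])
  finally show ?thesis .
qed

text \<open>The symmetry of the Laplacian makes \<open>\<integral> p\<^sub>s(v) p\<^sub>R\<^sub>-\<^sub>s(vw) dv\<close> constant in \<open>s\<close>.\<close>
lemma has_real_derivative_heat_convolution:
  assumes w: "w \<in> G" and s: "0 < s" "s < R"
  shows "((\<lambda>s. \<integral>v. p s v * p (R - s) (v * w) \<partial>\<mu>) has_real_derivative 0) (at s)"
proof -
  let ?L = "\<lambda>t. laplacian E n (p t)"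
  define D where "D \<sigma> v = 1/2 * (?L \<sigma> v * p (R - \<sigma>) (v * w)) - 1/2 * (p \<sigma> v * ?L (R - \<sigma>) (v * w))"
    for \<sigma> v
  have S: "{s / 2..(s + R) / 2} \<times> space \<mu> \<subseteq> {0<..<R} \<times> G"
    using s by (auto simp: space_haar)
  have "((\<lambda>s. \<integral>v. p s v * p (R - s) (v * w) \<partial>\<mu>) has_real_derivative (\<integral>v. D s v \<partial>\<mu>)) (at s)"
  proof (rule has_real_derivative_integral[OF finite_measure_haar, of "s / 2" s "(s + R) / 2"])
    fix \<sigma> v assume "\<sigma> \<in> {s / 2..(s + R) / 2}" and "v \<in> space \<mu>"
    then have "\<sigma> > 0" "R - \<sigma> > 0" "v \<in> G" "v * w \<in> G"
      using s w by (auto simp: space_haar intro: mult_mem)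
    have "((\<lambda>\<sigma>. R - \<sigma>) has_real_derivative -1) (at \<sigma>)"
      by (auto intro!: derivative_eq_intros)
    from DERIV_chain2[OF heat_equation[OF \<open>R - \<sigma> > 0\<close> \<open>v * w \<in> G\<close>] this]
    have "((\<lambda>\<sigma>. p \<sigma> v * p (R - \<sigma>) (v * w)) has_real_derivative
        1/2 * ?L \<sigma> v * p (R - \<sigma>) (v * w) + 1/2 * ?L (R - \<sigma>) (v * w) * -1 * p \<sigma> v) (at \<sigma>)"
      by (rule DERIV_mult[OF heat_equation[OF \<open>\<sigma> > 0\<close> \<open>v \<in> G\<close>]])
    then show "((\<lambda>\<sigma>. p \<sigma> v * p (R - \<sigma>) (v * w)) has_real_derivative D \<sigma> v) (at \<sigma>)"
      by (rule DERIV_cong) (simp add: D_def algebra_simps)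
  next
    show "continuous_on ({s / 2..(s + R) / 2} \<times> space \<mu>) (\<lambda>(\<sigma>, v). D \<sigma> v)"
      unfolding D_def case_prod_beta
      by (intro continuous_intros continuous_on_time_reflect[OF continuous_laplacian_heat_kernel S w]
          continuous_on_time_reflect[OF continuous_heat_kernel S w])
    show "integrable \<mu> (\<lambda>v. p \<sigma> v * p (R - \<sigma>) (v * w))" if "\<sigma> \<in> {s / 2..(s + R) / 2}" for \<sigma>
      using that s
      by (intro integrable_time_slice_product[OF continuous_heat_kernel continuous_heat_kernel _ _ w]) auto
    show "integrable \<mu> (D s)"
      unfolding D_def using s
      by (intro Bochner_Integration.integrable_diff Bochner_Integration.integrable_mult_right
          integrable_time_slice_product[OF continuous_laplacian_heat_kernel continuous_heat_kernel _ _ w]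
          integrable_time_slice_product[OF continuous_heat_kernel continuous_laplacian_heat_kernel _ _ w]) auto
  qed (use s in \<open>auto simp: space_haar compact\<close>)
  moreover have "(\<integral>v. D s v \<partial>\<mu>) = 0"
    unfolding D_def using s integral_laplacian_swap[OF s(1) _ w, of "R - s"]
      integrable_time_slice_product[OF continuous_laplacian_heat_kernel continuous_heat_kernel _ _ w]
      integrable_time_slice_product[OF continuous_heat_kernel continuous_laplacian_heat_kernel _ _ w]
    by simp
  ultimately show ?thesis by simp
qed

lemma heat_kernel_uniform_in_time:
  assumes "R > 0" and "\<epsilon> > 0"
  obtains d where "d > 0" and "\<And>s v. 0 < s \<Longrightarrow> s < d \<Longrightarrow> v \<in> G \<Longrightarrow> \<bar>p (R - s) v - p R v\<bar> < \<epsilon>"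
proof -
  have "uniformly_continuous_on ({R/2..R} \<times> G) (\<lambda>(t, x). p t x)"
    using \<open>R > 0\<close> by (intro compact_uniformly_continuous continuous_on_subset[OF continuous_heat_kernel]
        compact_Times compact_Icc compact) auto
  then obtain d where "d > 0" and d: "\<And>z z'. z \<in> {R/2..R} \<times> G \<Longrightarrow> z' \<in> {R/2..R} \<times> G \<Longrightarrow>
      dist z' z < d \<Longrightarrow> dist ((\<lambda>(t, x). p t x) z') ((\<lambda>(t, x). p t x) z) < \<epsilon>"
    using \<open>\<epsilon> > 0\<close> unfolding uniformly_continuous_on_def by metis
  show thesis
  proof (rule that[of "min d (R/2)"])
    show "min d (R/2) > 0" using \<open>d > 0\<close> \<open>R > 0\<close> by simp
    show "\<bar>p (R - s) v - p R v\<bar> < \<epsilon>" if "0 < s" "s < min d (R/2)" "v \<in> G" for s v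
      using d[of "(R, v)" "(R - s, v)"] that \<open>R > 0\<close> by (simp add: dist_Pair_Pair dist_real_def)
  qed
qed

lemma heat_convolution_error_tendsto:
  assumes w: "w \<in> G" and R: "R > 0"
  shows "((\<lambda>s. \<integral>v. p s v * (p (R - s) (v * w) - p R (v * w)) \<partial>\<mu>) \<longlongrightarrow> 0) (at_right 0)"
proof (rule tendstoI)
  fix e :: real assume "e > 0"
  have "((\<lambda>t. \<integral>v. p t v * 1 \<partial>\<mu>) \<longlongrightarrow> 1) (at_right 0)"
    using heat_kernel_delta[of "\<lambda>_. 1"] by simp
  from tendstoD[OF this zero_less_one]
  obtain b where "b > 0" and mass: "\<And>t. 0 < t \<Longrightarrow> t < b \<Longrightarrow> (\<integral>v. p t v \<partial>\<mu>) < 2"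
    unfolding eventually_at_right_field by (auto simp: dist_real_def abs_less_iff)
  obtain d where "d > 0" and unif: "\<And>s v. 0 < s \<Longrightarrow> s < d \<Longrightarrow> v \<in> G \<Longrightarrow> \<bar>p (R - s) v - p R v\<bar> < e / 2"
    using heat_kernel_uniform_in_time[OF R, of "e / 2"] \<open>e > 0\<close> by auto
  show "\<forall>\<^sub>F s in at_right 0. dist (\<integral>v. p s v * (p (R - s) (v * w) - p R (v * w)) \<partial>\<mu>) 0 < e"
    unfolding eventually_at_right_field
  proof (intro exI[of _ "min d (min b R)"] conjI allI impI)
    show "0 < min d (min b R)" using \<open>d > 0\<close> \<open>b > 0\<close> R by simp
    fix s :: real assume s: "0 < s" "s < min d (min b R)"
    have cont: "continuous_on G (\<lambda>v. p s v * (p (R - s) (v * w) - p R (v * w)))"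
      using s R by (intro continuous_intros continuous_on_time_slice[OF continuous_heat_kernel]
          continuous_on_time_slice_right_translate[OF continuous_heat_kernel _ w]) auto
    have pointwise: "\<bar>p s v * (p (R - s) (v * w) - p R (v * w))\<bar> \<le> p s v * (e / 2)" if "v \<in> G" for v
    proof -
      have "\<bar>p (R - s) (v * w) - p R (v * w)\<bar> \<le> e / 2"
        using unif[of s "v * w"] s mult_mem[OF that w] by simp
      moreover have "p s v > 0" using heat_kernel_pos s that by simp
      ultimately show ?thesis by (simp add: abs_mult)
    qed
    have "integrable \<mu> (\<lambda>v. p s v * (e / 2))"
      using s by (intro integrable_continuous continuous_intros
          continuous_on_time_slice[OF continuous_heat_kernel]) simp
    then have "\<bar>\<integral>v. p s v * (p (R - s) (v * w) - p R (v * w)) \<partial>\<mu>\<bar> \<le> (\<integral>v. p s v * (e / 2) \<partial>\<mu>)"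
      using pointwise integrable_continuous[OF cont]
      by (intro order_trans[OF integral_abs_bound] integral_mono) (auto simp: space_haar)
    also have "\<dots> = (\<integral>v. p s v \<partial>\<mu>) * (e / 2)" by simp
    also have "\<dots> < e" using mass[of s] s \<open>e > 0\<close> by (simp add: mult_strict_right_mono)
    finally show "dist (\<integral>v. p s v * (p (R - s) (v * w) - p R (v * w)) \<partial>\<mu>) 0 < e"
      by (simp add: dist_real_def)
  qed
qed

lemma heat_convolution_tendsto:
  assumes w: "w \<in> G" and R: "R > 0"
  shows "((\<lambda>s. \<integral>v. p s v * p (R - s) (v * w) \<partial>\<mu>) \<longlongrightarrow> p R w) (at_right 0)"
proof -
  have "((\<lambda>s. (\<integral>v. p s v * p R (v * w) \<partial>\<mu>) + (\<integral>v. p s v * (p (R - s) (v * w) - p R (v * w)) \<partial>\<mu>))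
      \<longlongrightarrow> p R w + 0) (at_right 0)"
    using heat_kernel_delta[OF continuous_on_time_slice_right_translate[OF continuous_heat_kernel R w]]
    by (intro tendsto_add heat_convolution_error_tendsto[OF w R]) simp
  moreover have "\<forall>\<^sub>F s in at_right 0.
      (\<integral>v. p s v * p R (v * w) \<partial>\<mu>) + (\<integral>v. p s v * (p (R - s) (v * w) - p R (v * w)) \<partial>\<mu>)
      = (\<integral>v. p s v * p (R - s) (v * w) \<partial>\<mu>)"
    unfolding eventually_at_right_field
  proof (intro exI[of _ R] conjI allI impI)
    fix s :: real assume s: "0 < s" "s < R"
    have "integrable \<mu> (\<lambda>v. p s v * p R (v * w))" "integrable \<mu> (\<lambda>v. p s v * p (R - s) (v * w))"
      using s R by (intro integrable_time_slice_product[OF continuous_heat_kernel continuous_heat_kernel _ _ w]; simp)+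
    then show "(\<integral>v. p s v * p R (v * w) \<partial>\<mu>) + (\<integral>v. p s v * (p (R - s) (v * w) - p R (v * w)) \<partial>\<mu>)
      = (\<integral>v. p s v * p (R - s) (v * w) \<partial>\<mu>)"
      by (simp flip: Bochner_Integration.integral_add add: algebra_simps)
  qed (use R in simp)
  ultimately show ?thesis by (simp add: tendsto_cong)
qed

lemma heat_kernel_semigroup:
  assumes w: "w \<in> G" and s: "0 < s" "s < R"
  shows "(\<integral>v. p s v * p (R - s) (v * w) \<partial>\<mu>) = p R w"
proof -
  define U where "U s = (\<integral>v. p s v * p (R - s) (v * w) \<partial>\<mu>)" for s
  have "\<exists>c. \<forall>x\<in>{0<..<R}. U x = c"
  proof (rule has_derivative_zero_constant)
    fix x assume "x \<in> {0<..<R}"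
    then have "(U has_real_derivative 0) (at x)"
      using has_real_derivative_heat_convolution[OF w] unfolding U_def by simp
    moreover have "(*) (0::real) = (\<lambda>h. 0)" by auto
    ultimately show "(U has_derivative (\<lambda>h. 0)) (at x within {0<..<R})"
      unfolding has_field_derivative_def by (auto intro: has_derivative_at_withinI)
  qed simp
  then obtain c where c: "\<And>x. x \<in> {0<..<R} \<Longrightarrow> U x = c" by blast
  have "(U \<longlongrightarrow> c) (at_right 0)"
    using s c unfolding eventually_at_right_field
    by (intro tendsto_eventually) (auto simp: eventually_at_right_field intro!: exI[of _ R])
  moreover have "(U \<longlongrightarrow> p R w) (at_right 0)"
    unfolding U_def using heat_convolution_tendsto[OF w] s by simp
  ultimately have "c = p R w" using tendsto_unique[OF trivial_limit_at_right_real] by blast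
  then show ?thesis using c[of s] s unfolding U_def by simp
qed

lemma heat_kernel_convolution:
  assumes x: "x \<in> G" and u: "u \<in> G" and T: "T > 0" and T': "T' > 0"
  shows "(\<integral>z. p T (ginv x * z) * p T' (z * u) \<partial>\<mu>) = p (T + T') (u * x)"
proof -
  have "continuous_on G (\<lambda>z. p T (ginv x * z) * p T' (z * u))"
    using x u T T' by (intro continuous_intros continuous_on_time_slice_right_translate[OF continuous_heat_kernel]
        continuous_on_compose_time_slice[OF continuous_heat_kernel]) (auto intro: mult_mem ginv_mem)
  from integral_left_translate[OF x borel_measurable_continuous[OF this]]
  have "(\<integral>z. p T (ginv x * z) * p T' (z * u) \<partial>\<mu>) = (\<integral>v. p T (ginv x * (x * v)) * p T' (x * v * u) \<partial>\<mu>)"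
    by simp
  also have "\<dots> = (\<integral>v. p T v * p ((T + T') - T) (v * (u * x)) \<partial>\<mu>)"
  proof (rule Bochner_Integration.integral_cong[OF refl])
    fix v assume "v \<in> space \<mu>"
    then have "p T' (x * v * u) = p T' (v * (u * x))"
      using heat_kernel_commute[OF T' x, of "v * u"] u by (simp add: space_haar mult_mem mult.assoc)
    then show "p T (ginv x * (x * v)) * p T' (x * v * u) = p T v * p ((T + T') - T) (v * (u * x))"
      using x by (simp add: ginv_cancel_left)
  qed
  also have "\<dots> = p (T + T') (u * x)"
    using T T' by (intro heat_kernel_semigroup mult_mem u x) auto
  finally show ?thesis .
qed

text \<open>Centrality lets the conjugate \<open>y\<^sup>-\<^sup>1zy\<close> be rotated to the front of the word, which
  turns the integral over \<open>z\<close> into a convolution of heat kernels.\<close>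
lemma integral_heat_kernel_Z_word:
  assumes xs: "set xs \<subseteq> G" and w: "\<And>j. j < 2*g + Suc (length xs) \<Longrightarrow> w j \<in> G"
    and x: "x \<in> G" and T: "T > 0" and T': "T' > 0"
  shows "(\<integral>z. p T (ginv x * z) * p T' (Z_word xs g w z) \<partial>\<mu>) = p (T + T') (Z_word xs g w x)"
proof -
  define A where "A = prod_list (map (\<lambda>j. ginv (w (2*g+j)) * xs ! j * w (2*g+j)) [0..<length xs])"
  define C where "C = prod_list (map (\<lambda>i. gcomm (w (2*i)) (w (2*i+1))) [0..<g])"
  define y where "y = w (2*g + length xs)"
  have "A \<in> G" unfolding A_def using xs by (intro prod_list_mem) (auto intro!: mult_mem ginv_mem w)
  have "C \<in> G" unfolding C_def by (intro prod_list_mem) (auto intro!: gcomm_mem w)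
  have "y \<in> G" "ginv y \<in> G" unfolding y_def by (intro w ginv_mem; simp)+
  have word: "Z_word xs g w z = A * (ginv y * z * y) * C" for z
    unfolding Z_word_split A_def C_def y_def ..
  define u where "u = y * C * A * ginv y"
  have "u \<in> G" unfolding u_def using \<open>A \<in> G\<close> \<open>C \<in> G\<close> \<open>y \<in> G\<close> \<open>ginv y \<in> G\<close> by (intro mult_mem)
  have rotate: "p t (Z_word xs g w z) = p t (z * u)" if "t > 0" "z \<in> G" for t z
  proof -
    have "p t (Z_word xs g w z) = p t ((A * ginv y) * (z * y * C))"
      unfolding word by (simp add: mult.assoc)
    also have "\<dots> = p t ((z * y * C) * (A * ginv y))"
      using that \<open>A \<in> G\<close> \<open>C \<in> G\<close> \<open>y \<in> G\<close> \<open>ginv y \<in> G\<close>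
      by (intro heat_kernel_commute mult_mem)
    also have "\<dots> = p t (z * u)" unfolding u_def by (simp add: mult.assoc)
    finally show ?thesis .
  qed
  have "(\<integral>z. p T (ginv x * z) * p T' (Z_word xs g w z) \<partial>\<mu>) = (\<integral>z. p T (ginv x * z) * p T' (z * u) \<partial>\<mu>)"
    using rotate[OF T'] by (intro Bochner_Integration.integral_cong) (auto simp: space_haar)
  also have "\<dots> = p (T + T') (u * x)"
    by (rule heat_kernel_convolution[OF x \<open>u \<in> G\<close> T T'])
  also have "\<dots> = p (T + T') (x * u)"
    using T T' x \<open>u \<in> G\<close> by (intro heat_kernel_commute) auto
  also have "\<dots> = p (T + T') (Z_word xs g w x)"
    using rotate[of "T + T'" x] T T' x by simp
  finally show ?thesis .
qed

lemma tendsto_heat_kernel: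
  assumes "t > 0" and "\<And>k. a k \<in> G" and "b \<in> G" and "a \<longlonglongrightarrow> b"
  shows "(\<lambda>k. p t (a k)) \<longlonglongrightarrow> p t b"
  using assms
  by (intro continuous_on_tendsto_compose[OF continuous_on_time_slice[OF continuous_heat_kernel]]) auto

lemma borel_measurable_heat_Z_integrand:
  assumes xs: "set xs \<subseteq> G" and x: "x \<in> G" and T: "T > 0" and T': "T' > 0"
  shows "(\<lambda>(z, w). p T (ginv x * z) * p T' (Z_word xs g w z))
    \<in> borel_measurable (\<mu> \<Otimes>\<^sub>M Pi\<^sub>M {..<2*g + Suc (length xs)} (\<lambda>_. \<mu>))"
proof -
  define N where "N = 2*g + Suc (length xs)"
  define P where "P = Pi\<^sub>M {..<N} (\<lambda>_. \<mu>)"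
  define f where "f j = (\<lambda>\<omega> :: 'a \<times> (nat \<Rightarrow> 'a). if j < N then snd \<omega> j else fst \<omega>)" for j
  define \<Phi> where "\<Phi> c = p T (ginv x * c N) * p T' (Z_word xs g c (c N))" for c
  have "(\<lambda>\<omega>. \<Phi> (\<lambda>j. f j \<omega>)) \<in> borel_measurable (\<mu> \<Otimes>\<^sub>M P)"
  proof (rule borel_measurable_sequentially_continuous_compose[OF compact, where K = "Suc N" and f = f and \<Phi> = \<Phi>])
    show "f j \<in> \<mu> \<Otimes>\<^sub>M P \<rightarrow>\<^sub>M borel" for j
      unfolding f_def P_def by (rule measurable_pair_PiM_coordinate)
    show "f j \<omega> \<in> G" if "\<omega> \<in> space (\<mu> \<Otimes>\<^sub>M P)" for j \<omega>
      using pair_PiM_coordinate_mem[OF that[unfolded P_def]] unfolding f_def by simp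
  next
    fix c v assume c: "\<And>j k. j < Suc N \<Longrightarrow> c k j \<in> G" and v: "\<And>j. j < Suc N \<Longrightarrow> v j \<in> G"
      and lim: "\<And>j. j < Suc N \<Longrightarrow> (\<lambda>k. c k j) \<longlonglongrightarrow> v j"
    have "(\<lambda>k. ginv x * c k N) \<longlonglongrightarrow> ginv x * v N"
      using lim by (intro tendsto_mult tendsto_const) simp
    moreover have "(\<lambda>k. Z_word xs g (c k) (c k N)) \<longlonglongrightarrow> Z_word xs g v (v N)"
      by (rule tendsto_Z_word[OF xs]) (use c v lim in \<open>auto simp: N_def\<close>)
    moreover have "Z_word xs g (c k) (c k N) \<in> G" "Z_word xs g v (v N) \<in> G" for k
      using xs c v unfolding N_def by (auto intro!: Z_word_mem)
    ultimately show "(\<lambda>k. \<Phi> (c k)) \<longlonglongrightarrow> \<Phi> v"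
      unfolding \<Phi>_def using c v x T T'
      by (intro tendsto_mult tendsto_heat_kernel) (auto intro: mult_mem ginv_mem lim)
  qed
  moreover have "\<Phi> (\<lambda>j. f j \<omega>) = (\<lambda>(z, w). p T (ginv x * z) * p T' (Z_word xs g w z)) \<omega>" for \<omega>
  proof -
    obtain z w where \<omega>: "\<omega> = (z, w)" by fastforce
    have "Z_word xs g (\<lambda>j. f j \<omega>) z = Z_word xs g w z"
      by (rule Z_word_cong) (simp add: f_def \<omega> N_def)
    then show ?thesis unfolding \<Phi>_def using \<omega> by (simp add: f_def N_def)
  qed
  ultimately show ?thesis unfolding P_def N_def by simp
qed

lemma integrable_heat_Z_integrand:
  assumes xs: "set xs \<subseteq> G" and x: "x \<in> G" and T: "T > 0" and T': "T' > 0"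
  shows "integrable (\<mu> \<Otimes>\<^sub>M Pi\<^sub>M {..<2*g + Suc (length xs)} (\<lambda>_. \<mu>))
    (\<lambda>(z, w). p T (ginv x * z) * p T' (Z_word xs g w z))"
proof -
  define P where "P = Pi\<^sub>M {..<2*g + Suc (length xs)} (\<lambda>_. \<mu>)"
  have "prob_space P" unfolding P_def by (rule prob_space_PiM) (rule prob_space_haar)
  then interpret pair: prob_space "\<mu> \<Otimes>\<^sub>M P"
    by (rule prob_space_pair[OF prob_space_haar])
  obtain B1 where B1: "\<And>y. y \<in> G \<Longrightarrow> \<bar>p T y\<bar> \<le> B1"
    using continuous_bounded[OF continuous_on_time_slice[OF continuous_heat_kernel T]] by blast
  obtain B2 where B2: "\<And>y. y \<in> G \<Longrightarrow> \<bar>p T' y\<bar> \<le> B2"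
    using continuous_bounded[OF continuous_on_time_slice[OF continuous_heat_kernel T']] by blast
  have bound: "\<bar>p T (ginv x * z) * p T' (Z_word xs g w z)\<bar> \<le> B1 * B2"
    if "(z, w) \<in> space (\<mu> \<Otimes>\<^sub>M P)" for z w
  proof -
    have "z \<in> G" "\<And>j. j < 2*g + Suc (length xs) \<Longrightarrow> w j \<in> G"
      using that unfolding P_def by (auto simp: space_pair_measure space_PiM space_haar PiE_iff)
    then have "\<bar>p T (ginv x * z)\<bar> \<le> B1" "\<bar>p T' (Z_word xs g w z)\<bar> \<le> B2"
      using x xs by (auto intro!: B1 B2 mult_mem ginv_mem Z_word_mem)
    then show ?thesis
      unfolding abs_mult by (intro mult_mono) auto
  qed
  have "AE \<omega> in \<mu> \<Otimes>\<^sub>M P. norm ((\<lambda>(z, w). p T (ginv x * z) * p T' (Z_word xs g w z)) \<omega>) \<le> B1 * B2"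
    by (rule AE_I2) (use bound in \<open>auto split: prod.splits\<close>)
  moreover have "(\<lambda>(z, w). p T (ginv x * z) * p T' (Z_word xs g w z)) \<in> borel_measurable (\<mu> \<Otimes>\<^sub>M P)"
    unfolding P_def by (rule borel_measurable_heat_Z_integrand[OF xs x T T'])
  ultimately show ?thesis
    unfolding P_def[symmetric] by (rule pair.integrable_const_bound)
qed

lemma heat_sg_Zfun_snoc:
  assumes xs: "set xs \<subseteq> G" and x: "x \<in> G" and T: "T > 0" and T': "T' > 0"
  shows "heat_sg \<mu> p T (\<lambda>z. Zfun \<mu> p g T' (xs @ [z])) x = Zfun \<mu> p g (T + T') (xs @ [x])"
proof -
  define P where "P = Pi\<^sub>M {..<2*g + Suc (length xs)} (\<lambda>_. \<mu>)"
  interpret pair_sigma_finite \<mu> P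
    unfolding P_def
    by (intro pair_sigma_finite.intro prob_space_imp_sigma_finite prob_space_PiM prob_space_haar)
  have "heat_sg \<mu> p T (\<lambda>z. Zfun \<mu> p g T' (xs @ [z])) x
      = (\<integral>z. p T (ginv x * z) * (\<integral>w. p T' (Z_word xs g w z) \<partial>P) \<partial>\<mu>)"
    unfolding heat_sg_def Zfun_snoc P_def ..
  also have "\<dots> = (\<integral>z. (\<integral>w. p T (ginv x * z) * p T' (Z_word xs g w z) \<partial>P) \<partial>\<mu>)"
    by simp
  also have "\<dots> = (\<integral>w. (\<integral>z. p T (ginv x * z) * p T' (Z_word xs g w z) \<partial>\<mu>) \<partial>P)"
  proof -
    have "integrable (\<mu> \<Otimes>\<^sub>M P) (\<lambda>(z, w). p T (ginv x * z) * p T' (Z_word xs g w z))"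
      unfolding P_def by (rule integrable_heat_Z_integrand[OF xs x T T'])
    from Fubini_integral[OF this] show ?thesis by simp
  qed
  also have "\<dots> = (\<integral>w. p (T + T') (Z_word xs g w x) \<partial>P)"
  proof (rule Bochner_Integration.integral_cong[OF refl])
    fix w assume "w \<in> space P"
    then have "w j \<in> G" if "j < 2*g + Suc (length xs)" for j
      using that unfolding P_def by (auto simp: space_PiM space_haar PiE_iff)
    then show "(\<integral>z. p T (ginv x * z) * p T' (Z_word xs g w z) \<partial>\<mu>) = p (T + T') (Z_word xs g w x)"
      by (rule integral_heat_kernel_Z_word[OF xs _ x T T'])
  qed
  also have "\<dots> = Zfun \<mu> p g (T + T') (xs @ [x])"
    unfolding Zfun_snoc P_def ..
  finally show ?thesis .
qed

end

theorem mainTheorem8: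
  fixes G :: "'a::{real_normed_algebra_1,banach} set"
    and \<mu> :: "'a measure" and B :: "'a \<Rightarrow> 'a \<Rightarrow> real"
    and E :: "nat \<Rightarrow> 'a" and n :: nat
    and p :: "real \<Rightarrow> 'a \<Rightarrow> real"
    and g :: nat and T T' :: real and xs :: "'a list" and x :: 'a
  assumes "compact_connected_lie_group G"
    and "haar_prob G \<mu>"
    and "biinv_metric G B"
    and "orthonormal_basis G B E n"
    and "volume_one \<mu> E n"
    and "heat_kernel G \<mu> E n p"
    and "T > 0" and "T' > 0"
    and "set xs \<subseteq> G" and "x \<in> G"
  shows "heat_sg \<mu> p T (\<lambda>z. Zfun \<mu> p g T' (xs @ [z])) x = Zfun \<mu> p g (T + T') (xs @ [x])"
proof -
  interpret heat_kernel_group G \<mu> E n p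
  proof
    show "subgroup_of_units G" and "compact G"
      using assms(1) unfolding compact_connected_lie_group_def by auto
    show "haar_prob G \<mu>" and "heat_kernel G \<mu> E n p"
      using assms(2,6) by auto
    show "E i \<in> lie_alg G" if "i < n" for i
      using assms(4) that unfolding orthonormal_basis_def by auto
  qed
  show ?thesis
    using assms(7-10) by (intro heat_sg_Zfun_snoc)
qed

end
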